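(* Let $U\in\mathbb R^{n\times r}$ and $V\in\mathbb R^{T\times r}$ have orthonormal columns, and let $\mathbf T=\{UA^\top+BV^\top+a\mathbf 1^\top: A\in\mathbb R^{T\times r},B\in\mathbb R^{n\times r},a\in\mathbb R^n\}$. Let $\rho=(I-VV^\top)\mathbf 1$ and assume $\rho\ne 0$. Then the orthogonal projection onto $\mathbf T^\perp$ is, for every $X\in\mathbb R^{n\times T}$, $$P_{\mathbf T^\perp}(X)=(I-UU^\top)\,X\Big(I-\frac{\rho\rho^\top}{\|\rho\|^2}\Big)(I-VV^\top).$$
   Context: $\mathbf 1\in\mathbb R^T$ is the all-ones vector; orthogonality is with respect to the Frobenius inner product. *)

theory Defs
  imports "HOL-Analysis.Analysis"
begin

text \<open>Matrices are represented as real ^ 'cols ^ 'rows (HOL-Analysis); the inner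
product on this type is the Frobenius inner product.\<close>

definition ones_vec :: "real ^ 't" where
  "ones_vec = (\<chi> i. 1)"

definition outer :: "real ^ 'm \<Rightarrow> real ^ 'k \<Rightarrow> real ^ 'k ^ 'm" where
  "outer a b = (\<chi> i j. a $ i * b $ j)"

definition tangent_space :: "real ^ 'r ^ 'n \<Rightarrow> real ^ 'r ^ 't \<Rightarrow> (real ^ 't ^ 'n) set" where
  "tangent_space U V =
     {U ** transpose A + B ** transpose V + outer a ones_vec
        | (A :: real ^ 'r ^ 't) (B :: real ^ 'r ^ 'n) (a :: real ^ 'n). True}"

definition orth_proj :: "'a::real_inner set \<Rightarrow> 'a \<Rightarrow> 'a" where
  "orth_proj S X = (THE p. p \<in> S \<and> (\<forall>y\<in>S. orthogonal (X - p) y))"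

end

theory Submission
  imports Defs
begin

(* By the Frobenius adjoint identities, Y is orthogonal to T exactly when U^T Y = 0,
   Y V = 0 and Y 1 = 0.  Put rho = (I - VV^T) 1 and Q = I - rho rho^T / |rho|^2.  The map
   X |-> (I - UU^T) X Q (I - VV^T) lands in T^perp because Q rho = 0, and its adjoint
   Y |-> (I - UU^T) Y (I - VV^T) Q fixes every Y in T^perp, as such Y satisfy
   Y rho = Y 1 = 0.  So the image of X lies in T^perp and has the same inner products
   with T^perp as X, which characterises the orthogonal projection of X. *)

lemma transpose_zero [simp]: "transpose 0 = 0"
  by (simp add: transpose_def vec_eq_iff)

lemma transpose_diff:
  fixes A B :: "'a::ab_group_add ^ 'm ^ 'n"
  shows "transpose (A - B) = transpose A - transpose B"
  by (simp add: transpose_def vec_eq_iff)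

lemma matrix_diff_ldistrib: "A ** (B - C) = A ** B - A ** (C :: 'a::ring_1 ^ 'k ^ 'm)"
  by (simp add: matrix_matrix_mult_def vec_eq_iff sum_subtractf right_diff_distrib)

lemma matrix_diff_rdistrib: "(A - B) ** C = A ** C - B ** (C :: 'a::ring_1 ^ 'k ^ 'm)"
  by (simp add: matrix_matrix_mult_def vec_eq_iff sum_subtractf left_diff_distrib)

lemma outer_zero_left [simp]: "outer 0 b = 0"
  by (simp add: outer_def vec_eq_iff)

lemma transpose_outer: "transpose (outer a b) = outer b a"
  by (simp add: outer_def transpose_def vec_eq_iff mult.commute)

lemma outer_mult_vector: "outer a b *v c = (b \<bullet> c) *\<^sub>R a"
  by (simp add: outer_def matrix_vector_mult_def inner_vec_def vec_eq_iff
      sum_distrib_left sum_distrib_right mult_ac)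

lemma matrix_mul_outer: "Y ** outer a b = outer (Y *v a) b"
  by (simp add: outer_def matrix_vector_mult_def matrix_matrix_mult_def vec_eq_iff
      sum_distrib_left sum_distrib_right mult_ac)

lemma inner_matrix_mul_eq_sum:
  fixes A :: "real ^ 'm ^ 'n" and B :: "real ^ 'k ^ 'm"
  shows "(A ** B) \<bullet> C = (\<Sum>i\<in>UNIV. \<Sum>j\<in>UNIV. \<Sum>k\<in>UNIV. A$i$j * B$j$k * C$i$k)"
  by (simp add: inner_vec_def matrix_matrix_mult_def sum_distrib_right)
    (rule sum.cong[OF refl], rule sum.swap)

lemma inner_matrix_mul_left:
  fixes A :: "real ^ 'm ^ 'n" and B :: "real ^ 'k ^ 'm"
  shows "(A ** B) \<bullet> C = B \<bullet> (transpose A ** C)"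
  unfolding inner_matrix_mul_eq_sum
  by (simp add: inner_vec_def matrix_matrix_mult_def transpose_def sum_distrib_left mult_ac)
    (rule trans[OF sum.swap], rule sum.cong[OF refl], rule sum.swap)

lemma inner_matrix_mul_right:
  fixes A :: "real ^ 'm ^ 'n" and B :: "real ^ 'k ^ 'm"
  shows "(A ** B) \<bullet> C = A \<bullet> (C ** transpose B)"
  unfolding inner_matrix_mul_eq_sum
  by (simp add: inner_vec_def matrix_matrix_mult_def transpose_def sum_distrib_left mult_ac)

lemma inner_matrix_mul_sandwich:
  fixes A :: "real ^ 'm ^ 'n" and X :: "real ^ 'k ^ 'm" and B :: "real ^ 'l ^ 'k"
  shows "(A ** X ** B) \<bullet> Y = X \<bullet> (transpose A ** Y ** transpose B)"
  by (simp only: inner_matrix_mul_right[of "A ** X" B] inner_matrix_mul_left[of A X]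
      matrix_mul_assoc)

lemma inner_outer: "outer a b \<bullet> Y = a \<bullet> (Y *v b)"
  by (simp add: inner_vec_def outer_def matrix_vector_mult_def sum_distrib_left mult_ac)

lemma orth_proj_eqI:
  assumes "subspace S" and "p \<in> S" and "\<And>y. y \<in> S \<Longrightarrow> p \<bullet> y = X \<bullet> y"
  shows "orth_proj S X = p"
  unfolding orth_proj_def
proof (rule the_equality)
  show "p \<in> S \<and> (\<forall>y\<in>S. orthogonal (X - p) y)"
    using assms(2,3) by (simp add: orthogonal_def inner_diff_left)
next
  fix q assume q: "q \<in> S \<and> (\<forall>y\<in>S. orthogonal (X - q) y)"
  then have "q - p \<in> S"
    using assms(1,2) by (simp add: subspace_diff)
  then have "p \<bullet> (q - p) = X \<bullet> (q - p)" and "(X - q) \<bullet> (q - p) = 0"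
    using assms(3) q by (auto simp: orthogonal_def)
  then have "(q - p) \<bullet> (q - p) = 0"
    by (simp add: inner_diff_left)
  then show "q = p" by simp
qed

lemma orthogonal_comp_tangent_space_iff:
  fixes U :: "real ^ 'r ^ 'n" and V :: "real ^ 'r ^ 't" and Y :: "real ^ 't ^ 'n"
  shows "Y \<in> orthogonal_comp (tangent_space U V) \<longleftrightarrow>
    transpose U ** Y = 0 \<and> Y ** V = 0 \<and> Y *v ones_vec = 0"
proof
  assume Y: "Y \<in> orthogonal_comp (tangent_space U V)"
  have orth: "(U ** transpose A + B ** transpose V + outer a ones_vec) \<bullet> Y = 0" for A B a
    using Y unfolding orthogonal_comp_def orthogonal_def tangent_space_def by blast
  have "(transpose U ** Y) \<bullet> (transpose U ** Y) = 0"
    using orth[of "transpose (transpose U ** Y)" 0 0] by (simp add: inner_matrix_mul_left)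
  moreover have "(Y ** V) \<bullet> (Y ** V) = 0"
    using orth[of 0 "Y ** V" 0] by (simp add: inner_matrix_mul_right)
  moreover have "(Y *v ones_vec) \<bullet> (Y *v ones_vec) = 0"
    using orth[of 0 0 "Y *v ones_vec"] by (simp add: inner_outer)
  ultimately show "transpose U ** Y = 0 \<and> Y ** V = 0 \<and> Y *v ones_vec = 0"
    by simp
next
  assume "transpose U ** Y = 0 \<and> Y ** V = 0 \<and> Y *v ones_vec = 0"
  then show "Y \<in> orthogonal_comp (tangent_space U V)"
    unfolding orthogonal_comp_def orthogonal_def tangent_space_def
    by (auto simp: inner_add_left inner_outer inner_matrix_mul_left[of U]
        inner_matrix_mul_right[of _ "transpose V"])
qed

lemma transpose_id_minus_proj:
  fixes U :: "'a::comm_ring_1 ^ 'r ^ 'n"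
  shows "transpose (mat 1 - U ** transpose U) = mat 1 - U ** transpose U"
  by (simp add: transpose_diff matrix_transpose_mul)

lemma transpose_mult_id_minus_proj:
  fixes U :: "'a::comm_ring_1 ^ 'r ^ 'n"
  shows "transpose U ** U = mat 1 \<Longrightarrow> transpose U ** (mat 1 - U ** transpose U) = 0"
  by (simp add: matrix_diff_ldistrib matrix_mul_assoc)

lemma id_minus_proj_mult:
  fixes V :: "'a::comm_ring_1 ^ 'r ^ 't"
  shows "transpose V ** V = mat 1 \<Longrightarrow> (mat 1 - V ** transpose V) ** V = 0"
  by (simp add: matrix_diff_rdistrib flip: matrix_mul_assoc)

lemma id_minus_proj_mult_eq:
  fixes U :: "'a::comm_ring_1 ^ 'r ^ 'n"
  shows "transpose U ** Y = 0 \<Longrightarrow> (mat 1 - U ** transpose U) ** Y = Y"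
  by (simp add: matrix_diff_rdistrib flip: matrix_mul_assoc)

lemma mult_id_minus_proj_eq:
  fixes V :: "'a::comm_ring_1 ^ 'r ^ 't"
  shows "Y ** V = 0 \<Longrightarrow> Y ** (mat 1 - V ** transpose V) = Y"
  by (simp add: matrix_diff_ldistrib matrix_mul_assoc)

lemma transpose_id_minus_outer:
  "transpose (mat 1 - c *\<^sub>R outer a a) = mat 1 - c *\<^sub>R outer a a"
  by (simp add: transpose_diff transpose_scalar transpose_outer)

lemma id_minus_normalized_outer_mult_self:
  assumes "a \<noteq> 0"
  shows "(mat 1 - (1 / (norm a)\<^sup>2) *\<^sub>R outer a a) *v a = 0"
  using assms
  by (simp add: matrix_vector_mult_diff_rdistrib outer_mult_vector power2_norm_eq_inner
      flip: scaleR_matrix_vector_assoc)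

lemma mult_id_minus_outer_eq: "Y *v a = 0 \<Longrightarrow> Y ** (mat 1 - c *\<^sub>R outer a b) = Y"
  by (simp add: matrix_diff_ldistrib matrix_scalar_ac matrix_mul_outer
      flip: scaleR_matrix_vector_assoc)

lemma sandwich_mem_orthogonal_comp_tangent_space:
  fixes U :: "real ^ 'r ^ 'n" and V :: "real ^ 'r ^ 't" and X :: "real ^ 't ^ 'n"
  assumes "transpose U ** U = mat 1" and "transpose V ** V = mat 1"
    and "Q *v ((mat 1 - V ** transpose V) *v ones_vec) = 0"
  shows "(mat 1 - U ** transpose U) ** X ** Q ** (mat 1 - V ** transpose V)
    \<in> orthogonal_comp (tangent_space U V)" (is "?P \<in> _")
proof -
  have "transpose U ** ?P = 0"
    using transpose_mult_id_minus_proj[OF assms(1)] by (simp add: matrix_mul_assoc)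
  moreover have "?P ** V = 0"
    using id_minus_proj_mult[OF assms(2)] by (simp flip: matrix_mul_assoc)
  moreover have "?P *v ones_vec = 0"
    using assms(3) by (simp flip: matrix_vector_mul_assoc)
  ultimately show ?thesis
    by (simp add: orthogonal_comp_tangent_space_iff)
qed

lemma orthogonal_comp_tangent_space_fixed:
  fixes U :: "real ^ 'r ^ 'n" and V :: "real ^ 'r ^ 't" and Y :: "real ^ 't ^ 'n"
  assumes "Y \<in> orthogonal_comp (tangent_space U V)"
  shows "(mat 1 - U ** transpose U) ** Y = Y"
    and "Y ** (mat 1 - V ** transpose V) = Y"
    and "Y *v ((mat 1 - V ** transpose V) *v ones_vec) = 0"
  using assms
  by (simp_all add: orthogonal_comp_tangent_space_iff id_minus_proj_mult_eq mult_id_minus_proj_eq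
      matrix_vector_mul_assoc)

theorem lemma4:
  fixes U :: "real ^ 'r ^ 'n" and V :: "real ^ 'r ^ 't" and X :: "real ^ 't ^ 'n"
  assumes "transpose U ** U = mat 1"
      and "transpose V ** V = mat 1"
      and "(mat 1 - V ** transpose V) *v ones_vec \<noteq> 0"
  shows "orth_proj (orthogonal_comp (tangent_space U V)) X =
    (let \<rho> = (mat 1 - V ** transpose V) *v ones_vec in
      (mat 1 - U ** transpose U) ** X
        ** (mat 1 - (1 / (norm \<rho>)\<^sup>2) *\<^sub>R outer \<rho> \<rho>)
        ** (mat 1 - V ** transpose V))"
proof -
  define \<rho> where "\<rho> = (mat 1 - V ** transpose V) *v ones_vec"
  define Q where "Q = (mat 1 - (1 / (norm \<rho>)\<^sup>2) *\<^sub>R outer \<rho> \<rho> :: real ^ 't ^ 't)"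
  define P where "P = (mat 1 - U ** transpose U) ** X ** Q ** (mat 1 - V ** transpose V)"
  have "\<rho> \<noteq> 0"
    using assms(3) by (simp add: \<rho>_def)
  then have "Q *v \<rho> = 0"
    unfolding Q_def by (rule id_minus_normalized_outer_mult_self)
  then have "P \<in> orthogonal_comp (tangent_space U V)"
    unfolding P_def \<rho>_def by (rule sandwich_mem_orthogonal_comp_tangent_space[OF assms(1,2)])
  moreover have "P \<bullet> Y = X \<bullet> Y" if "Y \<in> orthogonal_comp (tangent_space U V)" for Y
  proof -
    note fixed = orthogonal_comp_tangent_space_fixed[OF that]
    have "Y ** Q = Y"
      using fixed(3) by (simp add: Q_def \<rho>_def mult_id_minus_outer_eq)
    have "P = (mat 1 - U ** transpose U) ** X ** (Q ** (mat 1 - V ** transpose V))"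
      by (simp add: P_def matrix_mul_assoc)
    then have "P \<bullet> Y =
        X \<bullet> ((mat 1 - U ** transpose U) ** Y ** ((mat 1 - V ** transpose V) ** Q))"
      by (simp only: inner_matrix_mul_sandwich matrix_transpose_mul transpose_id_minus_proj Q_def
          transpose_id_minus_outer)
    also have "\<dots> = X \<bullet> Y"
      using fixed(1,2) \<open>Y ** Q = Y\<close> by (simp add: matrix_mul_assoc)
    finally show ?thesis .
  qed
  ultimately have "orth_proj (orthogonal_comp (tangent_space U V)) X = P"
    by (simp add: orth_proj_eqI subspace_orthogonal_comp)
  then show ?thesis
    by (simp add: P_def Q_def \<rho>_def Let_def)
qed

end
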